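(* Let $\mathcal A$ be a commutative semiring, $V=\mathcal A^{(n)}$ free with basis $b_1,\dots,b_n$ (or $b_0,\dots,b_{n-1}$), and $\mathfrak G(V)$ its standard reduced Grassmann semialgebra. Let $2\le k<n$ and $u,u'\in\mathfrak G(V)_k$. (i) If $u\wedge v=u'\wedge v$ for all $v\in\mathfrak G(V)_{n-k}$, then $u=u'$. (ii) If $u\notin\overline{\mathfrak G(V)_k^\circ}$, then there is some $v\in\mathfrak G(V)_{n-k}$ with $u\wedge v\notin\overline{\mathfrak G(V)_n^\circ}$.
   Context: $\mathfrak G(V)=\bigoplus_r\mathfrak G(V)_r$ with $\mathfrak G(V)_0=\mathcal A$, $\mathfrak G(V)_1=V$, and for $r\ge2$, $\mathfrak G(V)_r$ the free $\mathcal A$-module with basis $\{b_I,b_I':|I|=r\}$ where $b_I=b_{i_1}\wedge\cdots\wedge b_{i_r}$ for increasing indices and $b_I'=(-)b_I$; $(-)$ is the $\mathcal A$-linear involution of $\mathfrak G(V)_r$ ($r\ge2$) exchanging $b_I$ and $b_I'$, compatible with the associative graded product $\wedge$, which satisfies $b_i\wedge b_i=\mathbb 0$ and $u\wedge w=(-)(w\wedge u)$ for $u,w\in V$. A quasi-zero is an element $x+(-)x$. $\overline{\mathfrak G^\circ}$ denotes the ideal of $\mathfrak G(V)$ generated by all quasi-zeros and all elements $w\wedge w$, $w\in V$, and $\overline{\mathfrak G(V)_r^\circ}$ its degree-$r$ part. *)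

theory Defs
  imports Main
begin

text \<open>Model of the standard reduced Grassmann semialgebra G(V) over a commutative
semiring 'a, V free with basis b_0,...,b_{n-1}.  An element is a coefficient
function  c :: nat set => bool => 'a : c I False is the coefficient of b_I and
c I True the coefficient of b_I' = (-) b_I.  In degrees 0 and 1 there are no
primed basis elements.\<close>

type_synonym 'a gelem = "nat set \<Rightarrow> bool \<Rightarrow> 'a"

definition grass_hom :: "nat \<Rightarrow> nat \<Rightarrow> ('a::comm_semiring_1) gelem \<Rightarrow> bool" where
  "grass_hom n r x \<longleftrightarrow>
     (\<forall>I t. x I t \<noteq> 0 \<longrightarrow> I \<subseteq> {..<n} \<and> card I = r \<and> (r \<le> 1 \<longrightarrow> \<not> t))"

text \<open>Parity of the permutation sorting (sorted I) @ (sorted J).\<close>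
definition odd_inv :: "nat set \<Rightarrow> nat set \<Rightarrow> bool" where
  "odd_inv I J = odd (card {(i, j). i \<in> I \<and> j \<in> J \<and> j < i})"

text \<open>Bilinear extension of  b_I \<and> b_J = 0 if I, J meet, and otherwise
b_{I \<union> J} or b'_{I \<union> J} according to the sign of the shuffle; primes multiply
via (-) compatibility.\<close>
definition wedge :: "('a::comm_semiring_1) gelem \<Rightarrow> 'a gelem \<Rightarrow> 'a gelem" where
  "wedge x y = (\<lambda>K t. \<Sum>I\<in>Pow K. \<Sum>s1\<in>UNIV. \<Sum>s2\<in>UNIV.
      if ((s1 \<noteq> s2) \<noteq> odd_inv I (K - I)) = t then x I s1 * y (K - I) s2 else 0)"

inductive qz_ideal :: "nat \<Rightarrow> nat \<Rightarrow> ('a::comm_semiring_1) gelem \<Rightarrow> bool" for n where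
  zero: "qz_ideal n r (\<lambda>I t. 0)"
| quasi_zero: "2 \<le> r \<Longrightarrow> grass_hom n r x \<Longrightarrow> qz_ideal n r (\<lambda>I t. x I t + x I (\<not> t))"
| square: "grass_hom n 1 w \<Longrightarrow> qz_ideal n 2 (wedge w w)"
| add: "qz_ideal n r x \<Longrightarrow> qz_ideal n r y \<Longrightarrow> qz_ideal n r (\<lambda>I t. x I t + y I t)"
| mult_left: "qz_ideal n r x \<Longrightarrow> grass_hom n s y \<Longrightarrow> qz_ideal n (s + r) (wedge y x)"
| mult_right: "qz_ideal n r x \<Longrightarrow> grass_hom n s y \<Longrightarrow> qz_ideal n (r + s) (wedge x y)"

end

theory Submission
  imports Defs
begin

text \<open>Pairing u with the basis vector of the complement of a k-set I \<subseteq> {..<n} reads off the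
coefficient of b_I in the top degree, up to the fixed shuffle sign. Hence u is determined by
its products with degree n - k elements, and u \<wedge> v = (-)(u \<wedge> v) for all such v forces
u = (-)u. Conversely every element of the ideal generated by the quasi-zeros and the squares
w \<wedge> w is (-)-invariant, and a (-)-invariant homogeneous u of degree \<ge> 2 is itself the
quasi-zero x + (-)x with x its unprimed part.\<close>

definition grass_basis :: "nat set \<Rightarrow> ('a::comm_semiring_1) gelem" where
  "grass_basis J = (\<lambda>I t. if I = J \<and> \<not> t then 1 else 0)"

definition prime_invariant :: "('a::comm_semiring_1) gelem \<Rightarrow> bool" where
  "prime_invariant x \<longleftrightarrow> (\<forall>I. x I False = x I True)"

lemma grass_hom_basis_complement:
  assumes "I \<subseteq> {..<n}" "card I = k" "k < n"
  shows "grass_hom n (n - k) (grass_basis ({..<n} - I) :: ('a::comm_semiring_1) gelem)"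
  using assms unfolding grass_hom_def grass_basis_def
  by (auto simp: card_Diff_subset finite_subset)

lemma wedge_basis_complement:
  fixes u :: "('a::comm_semiring_1) gelem"
  assumes I: "I \<subseteq> {..<n}"
  shows "wedge u (grass_basis ({..<n} - I)) {..<n} t = u I (t \<noteq> odd_inv I ({..<n} - I))"
proof -
  let ?K = "{..<n::nat}"
  let ?o = "odd_inv I (?K - I)"
  have summand: "(\<Sum>s1\<in>UNIV. \<Sum>s2\<in>UNIV.
      if ((s1 \<noteq> s2) \<noteq> odd_inv J (?K - J)) = t then u J s1 * grass_basis (?K - I) (?K - J) s2 else 0)
      = (if J = I then u I (t \<noteq> ?o) else 0)" if "J \<in> Pow ?K" for J
  proof (cases "J = I")
    case True
    then show ?thesis by (cases t; cases ?o) (simp_all add: UNIV_bool grass_basis_def)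
  next
    case False
    then have "?K - J \<noteq> ?K - I" using that I by blast
    then show ?thesis using False by (simp add: UNIV_bool grass_basis_def)
  qed
  have "wedge u (grass_basis (?K - I)) ?K t = (\<Sum>J\<in>Pow ?K. if J = I then u I (t \<noteq> ?o) else 0)"
    unfolding wedge_def using summand by (intro sum.cong) auto
  also have "\<dots> = u I (t \<noteq> ?o)" using I by (simp add: sum.delta)
  finally show ?thesis .
qed

lemma coeff_eq_wedge_basis_complement:
  fixes u :: "('a::comm_semiring_1) gelem"
  assumes "I \<subseteq> {..<n}"
  shows "u I t = wedge u (grass_basis ({..<n} - I)) {..<n} (t \<noteq> odd_inv I ({..<n} - I))"
  using wedge_basis_complement[OF assms, of u "t \<noteq> odd_inv I ({..<n} - I)"]
  by (cases "odd_inv I ({..<n} - I)") simp_all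

lemma grass_hom_eq_if_wedge_eq:
  fixes u u' :: "('a::comm_semiring_1) gelem"
  assumes "grass_hom n k u" "grass_hom n k u'" "k < n"
    and wedge_eq: "\<And>v. grass_hom n (n - k) v \<Longrightarrow> wedge u v = wedge u' v"
  shows "u = u'"
proof (intro ext)
  fix I t
  show "u I t = u' I t"
  proof (cases "I \<subseteq> {..<n} \<and> card I = k")
    case True
    then show ?thesis
      using wedge_eq[OF grass_hom_basis_complement[of I n k]] \<open>k < n\<close>
      by (simp add: coeff_eq_wedge_basis_complement[of I n u] coeff_eq_wedge_basis_complement[of I n u'])
  next
    case False
    then have "u I t = 0" "u' I t = 0" using assms(1,2) unfolding grass_hom_def by blast+
    then show ?thesis by simp
  qed
qed

lemma prime_invariant_if_wedge_prime_invariant: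
  fixes u :: "('a::comm_semiring_1) gelem"
  assumes "grass_hom n k u" "k < n"
    and wedge_inv: "\<And>v. grass_hom n (n - k) v \<Longrightarrow> prime_invariant (wedge u v)"
  shows "prime_invariant u"
  unfolding prime_invariant_def
proof
  fix I
  show "u I False = u I True"
  proof (cases "I \<subseteq> {..<n} \<and> card I = k")
    case True
    then have "prime_invariant (wedge u (grass_basis ({..<n} - I)))"
      using wedge_inv grass_hom_basis_complement \<open>k < n\<close> by blast
    then have "wedge u (grass_basis ({..<n} - I)) {..<n} False
        = wedge u (grass_basis ({..<n} - I)) {..<n} True"
      unfolding prime_invariant_def by blast
    then have "u I (False \<noteq> odd_inv I ({..<n} - I)) = u I (True \<noteq> odd_inv I ({..<n} - I))"
      using True by (simp only: wedge_basis_complement)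
    then show ?thesis by (cases "odd_inv I ({..<n} - I)") auto
  next
    case False
    then have "u I False = 0" "u I True = 0" using assms(1) unfolding grass_hom_def by blast+
    then show ?thesis by simp
  qed
qed

lemma prime_invariant_wedge_left:
  assumes "prime_invariant x" shows "prime_invariant (wedge y x)"
  using assms unfolding prime_invariant_def wedge_def
  by (auto intro!: sum.cong simp: UNIV_bool add_ac)

lemma prime_invariant_wedge_right:
  assumes "prime_invariant x" shows "prime_invariant (wedge x y)"
  using assms unfolding prime_invariant_def wedge_def
  by (auto intro!: sum.cong simp: UNIV_bool add_ac)

lemma sum_Pow_complement: "(\<Sum>I\<in>Pow K. f I) = (\<Sum>I\<in>Pow K. f (K - I))"
  by (rule sum.reindex_bij_witness[of _ "\<lambda>I. K - I" "\<lambda>I. K - I"]) (auto simp: double_diff)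

lemma odd_inv_singleton: "odd_inv {i} {j} = (j < i)"
proof -
  have "{(a, b). a \<in> {i} \<and> b \<in> {j} \<and> b < a} = (if j < i then {(i, j)} else {})" by auto
  then show ?thesis unfolding odd_inv_def by simp
qed

lemma odd_inv_swap_singletons:
  assumes "card I = 1" "card J = 1" "I \<inter> J = {}"
  shows "odd_inv J I \<longleftrightarrow> \<not> odd_inv I J"
proof -
  obtain i j where "I = {i}" "J = {j}" using assms(1,2) by (meson card_1_singletonE)
  with assms(3) show ?thesis by (auto simp: odd_inv_singleton)
qed

text \<open>The two shuffles of a pair of distinct indices have opposite parity, so the swap
I \<leftrightarrow> K - I in the defining sum of (w \<wedge> w) K exchanges the b_K and b'_K parts.\<close>
lemma prime_invariant_wedge_square:
  fixes w :: "('a::comm_semiring_1) gelem"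
  assumes "grass_hom n 1 w"
  shows "prime_invariant (wedge w w)"
  unfolding prime_invariant_def
proof
  fix K
  have unprimed: "w I True = 0" for I using assms unfolding grass_hom_def by auto
  have degree_one: "w I False \<noteq> 0 \<Longrightarrow> card I = 1" for I using assms unfolding grass_hom_def by auto
  define f where "f I = w I False * w (K - I) False" for I
  have wedge_sq: "wedge w w K t = (\<Sum>I\<in>Pow K. if odd_inv I (K - I) = t then f I else 0)" for t
    unfolding wedge_def f_def by (rule sum.cong[OF refl]) (simp add: UNIV_bool unprimed)
  have swap: "(if odd_inv (K - I) (K - (K - I)) then f (K - I) else 0)
      = (if \<not> odd_inv I (K - I) then f I else 0)" if "I \<in> Pow K" for I
  proof -
    have "K - (K - I) = I" "f (K - I) = f I"
      using that by (auto simp: f_def double_diff mult.commute)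
    moreover have "odd_inv (K - I) I \<longleftrightarrow> \<not> odd_inv I (K - I)" if "f I \<noteq> 0"
      using that degree_one unfolding f_def
      by (intro odd_inv_swap_singletons) (auto dest: mult_not_zero)
    ultimately show ?thesis by (cases "f I = 0") auto
  qed
  have "wedge w w K True = (\<Sum>I\<in>Pow K. if odd_inv (K - I) (K - (K - I)) then f (K - I) else 0)"
    by (simp add: wedge_sq sum_Pow_complement[of "\<lambda>I. if odd_inv I (K - I) then f I else 0"])
  also have "\<dots> = wedge w w K False"
    using swap by (simp add: wedge_sq)
  finally show "wedge w w K False = wedge w w K True" by simp
qed

lemma qz_ideal_prime_invariant: "qz_ideal n r x \<Longrightarrow> prime_invariant x"
proof (induction rule: qz_ideal.induct)
  case (square w)
  then show ?case by (rule prime_invariant_wedge_square)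
next
  case (mult_left r x s y)
  show ?case by (rule prime_invariant_wedge_left[OF mult_left.IH])
next
  case (mult_right r x s y)
  show ?case by (rule prime_invariant_wedge_right[OF mult_right.IH])
qed (simp_all add: prime_invariant_def add.commute)

lemma qz_ideal_if_prime_invariant:
  fixes u :: "('a::comm_semiring_1) gelem"
  assumes "2 \<le> k" "grass_hom n k u" "prime_invariant u"
  shows "qz_ideal n k u"
proof -
  define x where "x = (\<lambda>I t. if t then 0 else u I False)"
  have "grass_hom n k x"
    using assms(1,2) unfolding grass_hom_def x_def by auto
  moreover have "u = (\<lambda>I t. x I t + x I (\<not> t))"
    using assms(3) unfolding x_def prime_invariant_def by (intro ext) simp
  ultimately show ?thesis using qz_ideal.quasi_zero[OF assms(1)] by simp
qed

theorem proposition2p16: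
  fixes u u' :: "('a::comm_semiring_1) gelem" and n k :: nat
  assumes "2 \<le> k" and "k < n"
    and "grass_hom n k u" and "grass_hom n k u'"
  shows "((\<forall>v. grass_hom n (n - k) v \<longrightarrow> wedge u v = wedge u' v) \<longrightarrow> u = u')
       \<and> (\<not> qz_ideal n k u \<longrightarrow> (\<exists>v. grass_hom n (n - k) v \<and> \<not> qz_ideal n n (wedge u v)))"
proof (intro conjI impI)
  assume "\<forall>v. grass_hom n (n - k) v \<longrightarrow> wedge u v = wedge u' v"
  then show "u = u'" using grass_hom_eq_if_wedge_eq assms(2-4) by blast
next
  assume "\<not> qz_ideal n k u"
  then have "\<not> prime_invariant u" using qz_ideal_if_prime_invariant assms(1,3) by blast
  then show "\<exists>v. grass_hom n (n - k) v \<and> \<not> qz_ideal n n (wedge u v)"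
    using prime_invariant_if_wedge_prime_invariant[OF assms(3,2)] qz_ideal_prime_invariant by blast
qed

end
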